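(* Let $|\Phi^+\rangle=(|00\rangle+|11\rangle)/\sqrt2$ and $|\Psi^+\rangle=(|01\rangle+|10\rangle)/\sqrt2$. Under homogeneous two-qubit amplitude damping $\mathcal E_\gamma\otimes\mathcal E_\gamma$, $\gamma\in[0,1]$, $$\mathcal R\bigl((\mathcal E_\gamma\otimes\mathcal E_\gamma)(|\Phi^+\rangle\langle\Phi^+|)\bigr)=1+\gamma(1-\gamma),\qquad \mathcal R\bigl((\mathcal E_\gamma\otimes\mathcal E_\gamma)(|\Psi^+\rangle\langle\Psi^+|)\bigr)=1,$$ while the Wootters concurrences of these two states are $(1-\gamma)^2$ and $1-\gamma$ respectively.
   Context: $\mathcal E_\gamma$ is the single-qubit amplitude-damping channel with Kraus operators $E_0=|0\rangle\langle0|+\sqrt{1-\gamma}|1\rangle\langle1|$, $E_1=\sqrt\gamma|0\rangle\langle1|$. The robustness of magic is $\mathcal R(\rho)=\min\{\sum_j|q_j|:\rho=\sum_jq_j\sigma_j,\ q_j\in\mathbb R,\ \sigma_j\in\mathcal S\}$, where $\mathcal S$ is the two-qubit stabilizer polytope (convex hull of pure states $C|00\rangle$, $C$ a two-qubit Clifford unitary). *)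

theory Defs
  imports "HOL-Analysis.Analysis" "HOL-Computational_Algebra.Polynomial"
begin

text \<open>Single-qubit operators: complex 2x2 matrices indexed by the type 2 (basis 0,1).
Two-qubit operators: complex matrices indexed by 2 \<times> 2 (basis |ab> = (a,b)).\<close>

type_synonym qvec = "complex ^ 2"
type_synonym qmat = "complex ^ 2 ^ 2"
type_synonym qqvec = "complex ^ (2 \<times> 2)"
type_synonym qqmat = "complex ^ (2 \<times> 2) ^ (2 \<times> 2)"

definition adj :: "complex ^ 'n ^ 'm \<Rightarrow> complex ^ 'm ^ 'n" where
  "adj A = (\<chi> i j. cnj (A $ j $ i))"

definition cconj :: "complex ^ 'n ^ 'm \<Rightarrow> complex ^ 'n ^ 'm" where
  "cconj A = (\<chi> i j. cnj (A $ i $ j))"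

definition smat :: "complex \<Rightarrow> complex ^ 'n ^ 'm \<Rightarrow> complex ^ 'n ^ 'm" where
  "smat c A = (\<chi> i j. c * A $ i $ j)"

definition kron :: "qmat \<Rightarrow> qmat \<Rightarrow> qqmat" where
  "kron A B = (\<chi> ij kl. A $ fst ij $ fst kl * B $ snd ij $ snd kl)"

definition outer :: "complex ^ 'n \<Rightarrow> complex ^ 'n ^ 'n" where
  "outer v = (\<chi> i j. v $ i * cnj (v $ j))"

definition unitary :: "complex ^ 'n ^ 'n \<Rightarrow> bool" where
  "unitary U \<longleftrightarrow> U ** adj U = mat 1 \<and> adj U ** U = mat 1"

definition pI :: qmat where "pI = mat 1"
definition pX :: qmat where "pX = (\<chi> i j. if i \<noteq> j then 1 else 0)"
definition pY :: qmat where
  "pY = (\<chi> i j. if i = 0 \<and> j = 1 then - \<i> else if i = 1 \<and> j = 0 then \<i> else 0)"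
definition pZ :: qmat where
  "pZ = (\<chi> i j. if i = j then (if i = 0 then 1 else -1) else 0)"

definition pauli_group2 :: "qqmat set" where
  "pauli_group2 = {smat c (kron P Q) | c P Q.
      c \<in> {1, -1, \<i>, -\<i>} \<and> P \<in> {pI, pX, pY, pZ} \<and> Q \<in> {pI, pX, pY, pZ}}"

definition clifford2 :: "qqmat \<Rightarrow> bool" where
  "clifford2 U \<longleftrightarrow> unitary U \<and> (\<forall>P \<in> pauli_group2. U ** P ** adj U \<in> pauli_group2)"

definition ket00 :: qqvec where
  "ket00 = (\<chi> ab. if ab = (0, 0) then 1 else 0)"

definition stab_polytope :: "qqmat set" where
  "stab_polytope = convex hull {outer (U *v ket00) | U. clifford2 U}"

text \<open>Robustness of magic (the infimum, which is attained, over real affine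
decompositions into stabilizer states).\<close>
definition robustness :: "qqmat \<Rightarrow> real" where
  "robustness \<rho> = Inf {(\<Sum>\<sigma>\<in>F. \<bar>q \<sigma>\<bar>) | F q.
      finite F \<and> F \<subseteq> stab_polytope \<and> \<rho> = (\<Sum>\<sigma>\<in>F. q \<sigma> *\<^sub>R \<sigma>)}"

definition AD_kraus :: "real \<Rightarrow> nat \<Rightarrow> qmat" where
  "AD_kraus \<gamma> k = (if k = 0
     then (\<chi> i j. if i = 0 \<and> j = 0 then 1 else if i = 1 \<and> j = 1 then complex_of_real (sqrt (1 - \<gamma>)) else 0)
     else (\<chi> i j. if i = 0 \<and> j = 1 then complex_of_real (sqrt \<gamma>) else 0))"

definition AD2 :: "real \<Rightarrow> qqmat \<Rightarrow> qqmat" where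
  "AD2 \<gamma> \<rho> = (\<Sum>a<2. \<Sum>b<2.
      kron (AD_kraus \<gamma> a) (AD_kraus \<gamma> b) ** \<rho> ** adj (kron (AD_kraus \<gamma> a) (AD_kraus \<gamma> b)))"

definition Phi_plus :: qqvec where
  "Phi_plus = (\<chi> ab. if ab = (0, 0) \<or> ab = (1, 1) then complex_of_real (1 / sqrt 2) else 0)"

definition Psi_plus :: qqvec where
  "Psi_plus = (\<chi> ab. if ab = (0, 1) \<or> ab = (1, 0) then complex_of_real (1 / sqrt 2) else 0)"

text \<open>Wootters concurrence: with \<rho>~ = (Y\<otimes>Y) \<rho>* (Y\<otimes>Y), let \<lambda>1 \<ge> ... \<ge> \<lambda>4 be the
square roots of the eigenvalues (with multiplicity, roots of the characteristic
polynomial) of \<rho>\<rho>~; then C = max 0 (\<lambda>1 - \<lambda>2 - \<lambda>3 - \<lambda>4).\<close>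
definition charpoly :: "complex ^ 'n ^ 'n \<Rightarrow> complex poly" where
  "charpoly A = det (\<chi> i j. (if i = j then [:0, 1:] else 0) - [:A $ i $ j:])"

definition spin_flip :: "qqmat \<Rightarrow> qqmat" where
  "spin_flip \<rho> = kron pY pY ** cconj \<rho> ** kron pY pY"

definition concurrence :: "qqmat \<Rightarrow> real" where
  "concurrence \<rho> = (let ls = rev (sorted_list_of_multiset
        (image_mset (\<lambda>z. sqrt (Re z)) (proots (charpoly (\<rho> ** spin_flip \<rho>)))))
     in max 0 (ls ! 0 - ls ! 1 - ls ! 2 - ls ! 3))"

end

(*
  Both damped Bell states are X-states: their only nonzero entries couple |00> with |11> and
  |01> with |10>.

  Writing p = \<gamma>(1-\<gamma>)/2, the decompositions
    \<rho>_Phi = (\<gamma> - p) |00><00| + p (|01><01| + |10><10| - |11><11|) + (1-\<gamma>) |Phi+><Phi+|,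
    \<rho>_Psi = \<gamma> |00><00| + (1-\<gamma>) |Psi+><Psi+|
  into stabilizer states give the upper bounds. The lower bounds come from witnesses W with
  |tr(W \<sigma>)| \<le> 1 on the stabilizer polytope, since then tr(W \<rho>) \<le> \<Sum>|q_j| for every
  decomposition \<rho> = \<Sum> q_j \<sigma>_j. For Psi the identity is such a witness; for Phi it is
  W = (II + ZI + IZ + XX - YY - ZZ)/2, with tr(W \<rho>_Phi) = 1 + \<gamma>(1-\<gamma>). To bound W on a pure
  stabilizer state, write the state as (I + P + Q + PQ)/4 with commuting signed Paulis P, Q: each of
  tr(W P), tr(W Q), tr(W PQ) lies in {-2, 0, 2}, and whenever two of them equal 2, the third
  equals -2.

  Concurrence. The matrix \<rho> \<rho>~ is again an X-matrix, so its characteristic polynomial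
  factors into two quadratics with explicit roots.
*)

theory Submission
  imports Defs
begin

lemma two_eq_zero_2 [simp]: "(2::2) = 0"
  by simp

lemma UNIV_2: "(UNIV::2 set) = {0, 1}"
  using exhaust_2 by auto

lemma UNIV_2x2: "(UNIV::(2 \<times> 2) set) = {(0,0), (0,1), (1,0), (1,1)}"
  by (auto simp: UNIV_2 simp flip: UNIV_Times_UNIV)

lemma sum_UNIV_2: "sum f (UNIV::2 set) = f 0 + f 1"
  by (simp add: UNIV_2)

lemma sum_UNIV_2x2: "sum f (UNIV::(2 \<times> 2) set) = f (0,0) + f (0,1) + f (1,0) + f (1,1)"
  by (simp add: UNIV_2x2 algebra_simps)

lemma forall_2: "(\<forall>i::2. P i) \<longleftrightarrow> P 0 \<and> P 1"
  by (metis exhaust_2 two_eq_zero_2)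

lemma forall_2x2: "(\<forall>i::2 \<times> 2. P i) \<longleftrightarrow> P (0,0) \<and> P (0,1) \<and> P (1,0) \<and> P (1,1)"
  by (auto simp: forall_2)

lemma vec_eq_2: "(x::'a^2) = y \<longleftrightarrow> x$0 = y$0 \<and> x$1 = y$1"
  by (simp add: vec_eq_iff forall_2)

lemma vec_eq_2x2:
  "(x::'a^(2 \<times> 2)) = y \<longleftrightarrow> x$(0,0) = y$(0,0) \<and> x$(0,1) = y$(0,1) \<and> x$(1,0) = y$(1,0) \<and> x$(1,1) = y$(1,1)"
  unfolding vec_eq_iff forall_2x2 by simp

lemmas mat_simps = matrix_matrix_mult_def matrix_vector_mult_def mat_def adj_def cconj_def smat_def
  kron_def outer_def pI_def pX_def pY_def pZ_def sum_UNIV_2 sum_UNIV_2x2 vec_eq_2 vec_eq_2x2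

definition bit_val :: "2 \<Rightarrow> nat" where
  "bit_val a = (if a = 0 then 0 else 1)"

lemma bit_val_simps [simp]: "bit_val 0 = 0" "bit_val 1 = 1"
  by (simp_all add: bit_val_def)

text \<open>A 4 \<times> 4 matrix literal, rows and columns ordered |00>, |01>, |10>, |11>.\<close>
definition mat4 :: "complex list list \<Rightarrow> qqmat" where
  "mat4 L = (\<chi> i j. L ! (2 * bit_val (fst i) + bit_val (snd i)) ! (2 * bit_val (fst j) + bit_val (snd j)))"

lemma mat4_nth [simp]: "mat4 L $ (a,b) $ (c,d) = L ! (2 * bit_val a + bit_val b) ! (2 * bit_val c + bit_val d)"
  by (simp add: mat4_def)

definition inv_sqrt2 :: complex where
  "inv_sqrt2 = complex_of_real (1 / sqrt 2)"

lemma inv_sqrt2_simps [simp]: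
  "inv_sqrt2 * inv_sqrt2 = 1/2" "inv_sqrt2 * (inv_sqrt2 * x) = x / 2" "cnj inv_sqrt2 = inv_sqrt2"
proof -
  have "(1 / sqrt 2) * (1 / sqrt 2) = (1/2::real)"
    by (simp add: divide_simps)
  then show inv_sqrt2_sq: "inv_sqrt2 * inv_sqrt2 = 1/2"
    unfolding inv_sqrt2_def of_real_mult[symmetric] by simp
  show "inv_sqrt2 * (inv_sqrt2 * x) = x / 2"
    by (simp add: inv_sqrt2_sq flip: mult.assoc)
  show "cnj inv_sqrt2 = inv_sqrt2"
    by (simp add: inv_sqrt2_def)
qed

section \<open>Matrix algebra\<close>

lemma smat_mult_left: "smat c A ** B = smat c (A ** B)"
  by (simp add: vec_eq_iff smat_def matrix_matrix_mult_def sum_distrib_left mult_ac)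

lemma smat_mult_right: "A ** smat c B = smat c (A ** B)"
  by (simp add: vec_eq_iff smat_def matrix_matrix_mult_def sum_distrib_left mult_ac)

lemma smat_smat: "smat c (smat d A) = smat (c * d) A"
  by (simp add: vec_eq_iff smat_def mult_ac)

lemma smat_1: "smat 1 A = A"
  by (simp add: vec_eq_iff smat_def)

lemma adj_mult: "adj (A ** B) = adj B ** adj A"
  by (simp add: vec_eq_iff adj_def matrix_matrix_mult_def mult.commute)

lemma adj_kron: "adj (kron A B) = kron (adj A) (adj B)"
  by (simp add: vec_eq_iff kron_def adj_def)

lemma kron_mult: "kron A B ** kron C D = kron (A ** C) (B ** D)"
  by (simp add: vec_eq_iff kron_def matrix_matrix_mult_def sum_UNIV_2x2 sum_UNIV_2 algebra_simps)

lemma kron_smat_left: "kron (smat c A) B = smat c (kron A B)"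
  by (simp add: vec_eq_iff kron_def smat_def mult_ac)

lemma kron_smat_right: "kron A (smat c B) = smat c (kron A B)"
  by (simp add: vec_eq_iff kron_def smat_def mult_ac)

lemma kron_id: "kron (mat 1) (mat 1) = mat 1"
  by (simp add: vec_eq_iff kron_def mat_def prod_eq_iff)

lemma matrix_add_rdistrib: "(B + C) ** A = B ** A + C ** A"
  by (simp add: vec_eq_iff matrix_matrix_mult_def distrib_right sum.distrib)

lemma unitary_mult: "unitary U \<Longrightarrow> unitary V \<Longrightarrow> unitary (U ** V)"
  unfolding unitary_def adj_mult
  by (metis matrix_mul_assoc matrix_mul_rid)

lemma unitary_kron: "unitary A \<Longrightarrow> unitary B \<Longrightarrow> unitary (kron A B)"
  by (simp add: unitary_def adj_kron kron_mult kron_id)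

lemma conj_conj: "U ** (V ** A ** adj V) ** adj U = (U ** V) ** A ** adj (U ** V)"
  by (simp add: adj_mult matrix_mul_assoc)

lemma conj_smat: "U ** smat c A ** adj U = smat c (U ** A ** adj U)"
  by (simp add: smat_mult_left smat_mult_right)

lemma conj_kron: "kron A B ** kron P Q ** adj (kron A B) = kron (A ** P ** adj A) (B ** Q ** adj B)"
  by (simp add: adj_kron kron_mult)

lemma conj_mult:
  assumes "unitary U"
  shows "U ** (A ** B) ** adj U = (U ** A ** adj U) ** (U ** B ** adj U)"
proof -
  have "U ** (A ** B) ** adj U = U ** A ** mat 1 ** B ** adj U"
    by (simp add: matrix_mul_assoc)
  also have "\<dots> = U ** A ** (adj U ** U) ** B ** adj U"
    using assms by (simp add: unitary_def)
  also have "\<dots> = (U ** A ** adj U) ** (U ** B ** adj U)"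
    by (simp add: matrix_mul_assoc)
  finally show ?thesis .
qed

lemma conj_inj:
  assumes "unitary U" "U ** A ** adj U = U ** B ** adj U"
  shows "A = B"
proof -
  have "adj U ** (U ** M ** adj U) ** U = (adj U ** U) ** M ** (adj U ** U)" for M
    by (simp add: matrix_mul_assoc)
  then have cancel: "adj U ** (U ** M ** adj U) ** U = M" for M
    using assms(1) by (simp add: unitary_def)
  have "A = adj U ** (U ** A ** adj U) ** U"
    by (simp only: cancel)
  also have "\<dots> = B"
    by (simp only: assms(2) cancel)
  finally show ?thesis .
qed

lemma conj_id: "unitary U \<Longrightarrow> U ** mat 1 ** adj U = mat 1"
  by (simp add: unitary_def)

lemma outer_mult: "outer (U *v v) = U ** outer v ** adj U"
proof -
  have "(U *v v) $ i * cnj ((U *v v) $ j) = (U ** outer v ** adj U) $ i $ j" for i j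
  proof -
    have "(U *v v) $ i * cnj ((U *v v) $ j) = (\<Sum>k\<in>UNIV. \<Sum>l\<in>UNIV. (U$i$k * v$k) * (cnj (U$j$l) * cnj (v$l)))"
      by (simp add: matrix_vector_mult_def sum_product)
    also have "\<dots> = (\<Sum>l\<in>UNIV. \<Sum>k\<in>UNIV. (U$i$k * v$k) * (cnj (U$j$l) * cnj (v$l)))"
      by (rule sum.swap)
    also have "\<dots> = (U ** outer v ** adj U) $ i $ j"
      by (simp add: matrix_matrix_mult_def outer_def adj_def sum_distrib_right sum_distrib_left mult_ac)
    finally show ?thesis .
  qed
  then show ?thesis
    by (simp add: vec_eq_iff outer_def)
qed

section \<open>Pauli group and Clifford unitaries\<close>

abbreviation phases :: "complex set" where
  "phases \<equiv> {1, -1, \<i>, -\<i>}"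

abbreviation paulis :: "qmat set" where
  "paulis \<equiv> {pI, pX, pY, pZ}"

lemma phases_mult: "c \<in> phases \<Longrightarrow> d \<in> phases \<Longrightarrow> c * d \<in> phases"
  by auto

lemma pauli_mult_table:
  "pI ** P = P" "P ** pI = P" "pX ** pX = pI" "pY ** pY = pI" "pZ ** pZ = pI"
  "pX ** pY = smat \<i> pZ" "pY ** pZ = smat \<i> pX" "pZ ** pX = smat \<i> pY"
  "pY ** pX = smat (-\<i>) pZ" "pZ ** pY = smat (-\<i>) pX" "pX ** pZ = smat (-\<i>) pY"
  by (simp_all add: mat_simps)

lemmas pauli_algebra = smat_mult_left smat_mult_right smat_smat kron_mult kron_smat_left kron_smat_right
  pauli_mult_table

lemma pauli_group2I: "c \<in> phases \<Longrightarrow> P \<in> paulis \<Longrightarrow> Q \<in> paulis \<Longrightarrow> smat c (kron P Q) \<in> pauli_group2"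
  unfolding pauli_group2_def by blast

lemma kron_pauli_in_group2: "P \<in> paulis \<Longrightarrow> Q \<in> paulis \<Longrightarrow> kron P Q \<in> pauli_group2"
  using pauli_group2I[of 1 P Q] by (simp add: smat_1)

lemma clifford2I:
  assumes "unitary U"
    and "\<And>P Q. P \<in> paulis \<Longrightarrow> Q \<in> paulis \<Longrightarrow> U ** kron P Q ** adj U \<in> pauli_group2"
  shows "clifford2 U"
  unfolding clifford2_def
proof (intro conjI ballI \<open>unitary U\<close>)
  fix M assume "M \<in> pauli_group2"
  then obtain c P Q where M: "M = smat c (kron P Q)" and "c \<in> phases" "P \<in> paulis" "Q \<in> paulis"
    unfolding pauli_group2_def by blast
  obtain d P' Q' where "U ** kron P Q ** adj U = smat d (kron P' Q')"
    and "d \<in> phases" "P' \<in> paulis" "Q' \<in> paulis"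
    using assms(2)[OF \<open>P \<in> paulis\<close> \<open>Q \<in> paulis\<close>] unfolding pauli_group2_def by blast
  then have "U ** M ** adj U = smat (c * d) (kron P' Q')"
    by (simp add: M conj_smat smat_smat)
  then show "U ** M ** adj U \<in> pauli_group2"
    using \<open>c \<in> phases\<close> \<open>d \<in> phases\<close> \<open>P' \<in> paulis\<close> \<open>Q' \<in> paulis\<close>
    by (simp only: pauli_group2I phases_mult)
qed

lemma clifford2_mult: "clifford2 U \<Longrightarrow> clifford2 V \<Longrightarrow> clifford2 (U ** V)"
  unfolding clifford2_def by (simp add: unitary_mult flip: conj_conj)

text \<open>Phases pass through conjugation, so it suffices to test the Pauli matrices themselves.\<close>
definition clifford1 :: "qmat \<Rightarrow> bool" where
  "clifford1 U \<longleftrightarrow> unitary U \<and> (\<forall>P\<in>paulis. \<exists>c\<in>phases. \<exists>Q\<in>paulis. U ** P ** adj U = smat c Q)"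

lemma clifford2_kron:
  assumes "clifford1 A" "clifford1 B"
  shows "clifford2 (kron A B)"
proof (rule clifford2I)
  show "unitary (kron A B)"
    using assms by (simp add: clifford1_def unitary_kron)
  fix P Q assume "P \<in> paulis" "Q \<in> paulis"
  then obtain c d P' Q' where "A ** P ** adj A = smat c P'" "B ** Q ** adj B = smat d Q'"
    and "c \<in> phases" "d \<in> phases" "P' \<in> paulis" "Q' \<in> paulis"
    using assms unfolding clifford1_def by meson
  then show "kron A B ** kron P Q ** adj (kron A B) \<in> pauli_group2"
    by (simp only: conj_kron kron_smat_left kron_smat_right smat_smat pauli_group2I phases_mult)
qed

lemma clifford1_pauli:
  assumes "P \<in> paulis"
  shows "clifford1 P"
proof -
  have "unitary P"
    using assms by (auto simp: unitary_def mat_simps)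
  moreover have "P ** Q ** adj P = smat 1 Q \<or> P ** Q ** adj P = smat (-1) Q" if "Q \<in> paulis" for Q
    using assms that by (auto simp: mat_simps)
  ultimately show ?thesis
    unfolding clifford1_def by blast
qed

definition hadamard :: qmat where
  "hadamard = (\<chi> i j. if i = 1 \<and> j = 1 then - inv_sqrt2 else inv_sqrt2)"

lemma clifford1_hadamard: "clifford1 hadamard"
proof -
  have "hadamard ** pI ** adj hadamard = smat 1 pI" "hadamard ** pX ** adj hadamard = smat 1 pZ"
    "hadamard ** pY ** adj hadamard = smat (-1) pY" "hadamard ** pZ ** adj hadamard = smat 1 pX"
    by (simp_all add: hadamard_def mat_simps)
  moreover have "unitary hadamard"
    by (simp add: unitary_def hadamard_def mat_simps)
  ultimately show ?thesis
    unfolding clifford1_def by auto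
qed

definition cnot :: qqmat where
  "cnot = mat4 [[1,0,0,0], [0,1,0,0], [0,0,0,1], [0,0,1,0]]"

lemma cnot_conj_pauli:
  "cnot ** kron pI pI ** adj cnot = smat 1 (kron pI pI)"
  "cnot ** kron pI pX ** adj cnot = smat 1 (kron pI pX)"
  "cnot ** kron pI pY ** adj cnot = smat 1 (kron pZ pY)"
  "cnot ** kron pI pZ ** adj cnot = smat 1 (kron pZ pZ)"
  "cnot ** kron pX pI ** adj cnot = smat 1 (kron pX pX)"
  "cnot ** kron pX pX ** adj cnot = smat 1 (kron pX pI)"
  "cnot ** kron pX pY ** adj cnot = smat 1 (kron pY pZ)"
  "cnot ** kron pX pZ ** adj cnot = smat (-1) (kron pY pY)"
  "cnot ** kron pY pI ** adj cnot = smat 1 (kron pY pX)"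
  "cnot ** kron pY pX ** adj cnot = smat 1 (kron pY pI)"
  "cnot ** kron pY pY ** adj cnot = smat (-1) (kron pX pZ)"
  "cnot ** kron pY pZ ** adj cnot = smat 1 (kron pX pY)"
  "cnot ** kron pZ pI ** adj cnot = smat 1 (kron pZ pI)"
  "cnot ** kron pZ pX ** adj cnot = smat 1 (kron pZ pX)"
  "cnot ** kron pZ pY ** adj cnot = smat 1 (kron pI pY)"
  "cnot ** kron pZ pZ ** adj cnot = smat 1 (kron pI pZ)"
  by (simp_all add: cnot_def mat_simps)

lemma clifford2_cnot: "clifford2 cnot"
proof (rule clifford2I)
  show "unitary cnot"
    by (simp add: unitary_def cnot_def mat_simps)
  fix P Q assume "P \<in> paulis" "Q \<in> paulis"
  then show "cnot ** kron P Q ** adj cnot \<in> pauli_group2"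
    by (auto simp only: insert_iff empty_iff cnot_conj_pauli intro!: pauli_group2I)
qed

section \<open>Stabilizer states\<close>

lemma stabilizer_state_in_stab_polytope: "clifford2 U \<Longrightarrow> outer (U *v ket00) \<in> stab_polytope"
  unfolding stab_polytope_def by (rule hull_inc) blast

definition basis_ket :: "2 \<Rightarrow> 2 \<Rightarrow> qqvec" where
  "basis_ket a b = (\<chi> ij. if ij = (a, b) then 1 else 0)"

lemma basis_state_in_stab_polytope: "outer (basis_ket a b) \<in> stab_polytope"
proof -
  define flip :: "2 \<Rightarrow> qmat" where "flip x = (if x = 0 then pI else pX)" for x
  have "clifford2 (kron (flip a) (flip b))"
    by (simp add: flip_def clifford2_kron clifford1_pauli)
  moreover have "kron (flip a) (flip b) *v ket00 = basis_ket a b"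
    using exhaust_2[of a] exhaust_2[of b]
    by (auto simp: flip_def basis_ket_def ket00_def mat_simps)
  ultimately show ?thesis
    by (metis stabilizer_state_in_stab_polytope)
qed

lemma Phi_plus_in_stab_polytope: "outer Phi_plus \<in> stab_polytope"
proof -
  have "(cnot ** kron hadamard pI) *v ket00 = Phi_plus"
    unfolding Phi_plus_def inv_sqrt2_def[symmetric] by (simp add: cnot_def hadamard_def ket00_def mat_simps)
  moreover have "clifford2 (cnot ** kron hadamard pI)"
    by (simp add: clifford2_mult clifford2_cnot clifford2_kron clifford1_hadamard clifford1_pauli)
  ultimately show ?thesis
    by (metis stabilizer_state_in_stab_polytope)
qed

lemma Psi_plus_in_stab_polytope: "outer Psi_plus \<in> stab_polytope"
proof -
  have "(kron pI pX ** (cnot ** kron hadamard pI)) *v ket00 = Psi_plus"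
    unfolding Psi_plus_def inv_sqrt2_def[symmetric] by (simp add: cnot_def hadamard_def ket00_def mat_simps)
  moreover have "clifford2 (kron pI pX ** (cnot ** kron hadamard pI))"
    by (simp add: clifford2_mult clifford2_cnot clifford2_kron clifford1_hadamard clifford1_pauli)
  ultimately show ?thesis
    by (metis stabilizer_state_in_stab_polytope)
qed

lemma outer_ket00: "outer ket00 = (1/4) *\<^sub>R (mat 1 + kron pZ pI + kron pI pZ + kron pZ pZ)"
  by (simp add: ket00_def mat_simps) (simp add: scaleR_conv_of_real)

lemma stabilizer_state_pauli_expansion:
  assumes "clifford2 U"
  obtains P Q R where "P \<in> pauli_group2" "Q \<in> pauli_group2" "R \<in> pauli_group2"
    "P ** Q = R" "Q ** P = R" "P ** R = Q" "R ** P = Q" "Q ** R = P" "R ** Q = P"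
    "distinct [mat 1, P, Q, R]" "outer (U *v ket00) = (1/4) *\<^sub>R (mat 1 + P + Q + R)"
proof -
  have U: "unitary U" and cliff: "\<And>M. M \<in> pauli_group2 \<Longrightarrow> U ** M ** adj U \<in> pauli_group2"
    using assms unfolding clifford2_def by auto
  define conj where "conj M = U ** M ** adj U" for M
  have group: "conj (kron pZ pI) \<in> pauli_group2" "conj (kron pI pZ) \<in> pauli_group2"
    "conj (kron pZ pZ) \<in> pauli_group2"
    unfolding conj_def by (simp_all add: cliff kron_pauli_in_group2)
  have "kron pZ pI ** kron pI pZ = kron pZ pZ" "kron pI pZ ** kron pZ pI = kron pZ pZ"
    "kron pZ pI ** kron pZ pZ = kron pI pZ" "kron pZ pZ ** kron pZ pI = kron pI pZ"
    "kron pI pZ ** kron pZ pZ = kron pZ pI" "kron pZ pZ ** kron pI pZ = kron pZ pI"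
    by (simp_all add: pauli_algebra)
  then have mult: "conj (kron pZ pI) ** conj (kron pI pZ) = conj (kron pZ pZ)"
    "conj (kron pI pZ) ** conj (kron pZ pI) = conj (kron pZ pZ)"
    "conj (kron pZ pI) ** conj (kron pZ pZ) = conj (kron pI pZ)"
    "conj (kron pZ pZ) ** conj (kron pZ pI) = conj (kron pI pZ)"
    "conj (kron pI pZ) ** conj (kron pZ pZ) = conj (kron pZ pI)"
    "conj (kron pZ pZ) ** conj (kron pI pZ) = conj (kron pZ pI)"
    unfolding conj_def by (simp_all flip: conj_mult[OF U])
  have "distinct (map conj [mat 1, kron pZ pI, kron pI pZ, kron pZ pZ])"
    unfolding distinct_map
  proof
    show "distinct [mat 1, kron pZ pI, kron pI pZ, kron pZ pZ]"
      by (simp add: mat_simps)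
    show "inj_on conj (set [mat 1, kron pZ pI, kron pI pZ, kron pZ pZ])"
      by (rule inj_onI) (use conj_inj[OF U] in \<open>simp add: conj_def\<close>)
  qed
  then have distinct: "distinct [mat 1, conj (kron pZ pI), conj (kron pI pZ), conj (kron pZ pZ)]"
    using conj_id[OF U] by (simp add: conj_def)
  have "outer (U *v ket00) = (1/4) *\<^sub>R (mat 1 + conj (kron pZ pI) + conj (kron pI pZ) + conj (kron pZ pZ))"
    using U by (simp add: outer_mult outer_ket00 conj_def matrix_add_ldistrib matrix_add_rdistrib
        matrix_scalar_ac scaleR_add_right unitary_def flip: scalar_matrix_assoc)
  with group mult distinct show thesis
    by (rule that)
qed

section \<open>Robustness of magic\<close>

definition expval :: "qqmat \<Rightarrow> qqmat \<Rightarrow> real" where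
  "expval W \<rho> = Re (trace (W ** \<rho>))"

lemma linear_expval: "linear (expval W)"
proof (rule linearI)
  fix A B :: qqmat and r :: real
  show "expval W (A + B) = expval W A + expval W B"
    by (simp add: expval_def matrix_add_ldistrib trace_add)
  have "trace (W ** (r *\<^sub>R A)) = r *\<^sub>R trace (W ** A)"
    by (simp add: trace_def matrix_matrix_mult_def scaleR_sum_right)
  then show "expval W (r *\<^sub>R A) = r *\<^sub>R expval W A"
    by (simp add: expval_def)
qed

lemma expval_sum: "expval W (\<Sum>\<sigma>\<in>F. q \<sigma> *\<^sub>R \<sigma>) = (\<Sum>\<sigma>\<in>F. q \<sigma> * expval W \<sigma>)"
proof -
  interpret linear "expval W" by (rule linear_expval)
  show ?thesis by (simp add: sum scaleR)
qed

lemma expval_bounded_on_stab_polytope: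
  assumes "\<And>U. clifford2 U \<Longrightarrow> \<bar>expval W (outer (U *v ket00))\<bar> \<le> 1"
    and "\<sigma> \<in> stab_polytope"
  shows "\<bar>expval W \<sigma>\<bar> \<le> 1"
proof -
  have "convex (expval W -` {-1..1})"
    by (rule convex_linear_vimage[OF linear_expval convex_real_interval(5)])
  then have "stab_polytope \<subseteq> expval W -` {-1..1}"
    unfolding stab_polytope_def using assms(1) by (intro hull_minimal) (auto simp: abs_le_iff)
  then show ?thesis
    using assms(2) by (auto simp: abs_le_iff)
qed

definition stab_costs :: "qqmat \<Rightarrow> real set" where
  "stab_costs \<rho> = {\<Sum>\<sigma>\<in>F. \<bar>q \<sigma>\<bar> | F q. finite F \<and> F \<subseteq> stab_polytope \<and> \<rho> = (\<Sum>\<sigma>\<in>F. q \<sigma> *\<^sub>R \<sigma>)}"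

lemma robustness_eq_Inf_stab_costs: "robustness \<rho> = Inf (stab_costs \<rho>)"
  unfolding robustness_def stab_costs_def ..

lemma robustness_le_finite:
  assumes "finite F" "F \<subseteq> stab_polytope" "\<rho> = (\<Sum>\<sigma>\<in>F. q \<sigma> *\<^sub>R \<sigma>)"
  shows "robustness \<rho> \<le> (\<Sum>\<sigma>\<in>F. \<bar>q \<sigma>\<bar>)"
  unfolding robustness_eq_Inf_stab_costs
proof (rule cInf_lower)
  show "(\<Sum>\<sigma>\<in>F. \<bar>q \<sigma>\<bar>) \<in> stab_costs \<rho>"
    using assms unfolding stab_costs_def by blast
  show "bdd_below (stab_costs \<rho>)"
    unfolding stab_costs_def by (rule bdd_belowI[of _ 0]) (auto intro: sum_nonneg)
qed

lemma stab_decomposition_of_list: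
  assumes "\<forall>(q, \<sigma>)\<in>set ds. \<sigma> \<in> stab_polytope" and "\<rho> = (\<Sum>(q, \<sigma>)\<leftarrow>ds. q *\<^sub>R \<sigma>)"
  obtains F p where "finite F" "F \<subseteq> stab_polytope" "\<rho> = (\<Sum>\<sigma>\<in>F. p \<sigma> *\<^sub>R \<sigma>)"
    "(\<Sum>\<sigma>\<in>F. \<bar>p \<sigma>\<bar>) \<le> (\<Sum>(q, \<sigma>)\<leftarrow>ds. \<bar>q\<bar>)"
proof
  define I where "I = {..<length ds}"
  define s where "s i = snd (ds ! i)" for i
  define p where "p \<sigma> = (\<Sum>i\<in>{i\<in>I. s i = \<sigma>}. fst (ds ! i))" for \<sigma>
  show fin: "finite (s ` I)"
    by (simp add: I_def)
  show "s ` I \<subseteq> stab_polytope"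
    using assms(1) by (auto simp: I_def s_def case_prod_beta)
  have "\<rho> = (\<Sum>i\<in>I. fst (ds ! i) *\<^sub>R s i)"
    using assms(2) by (simp add: sum_list_sum_nth atLeast0LessThan I_def s_def case_prod_beta)
  also have "\<dots> = (\<Sum>\<sigma>\<in>s ` I. \<Sum>i\<in>{i\<in>I. s i = \<sigma>}. fst (ds ! i) *\<^sub>R s i)"
    by (rule sum.image_gen) (simp add: I_def)
  also have "\<dots> = (\<Sum>\<sigma>\<in>s ` I. p \<sigma> *\<^sub>R \<sigma>)"
    unfolding p_def scaleR_sum_left by (intro sum.cong refl) auto
  finally show "\<rho> = (\<Sum>\<sigma>\<in>s ` I. p \<sigma> *\<^sub>R \<sigma>)" .
  have "(\<Sum>\<sigma>\<in>s ` I. \<bar>p \<sigma>\<bar>) \<le> (\<Sum>\<sigma>\<in>s ` I. \<Sum>i\<in>{i\<in>I. s i = \<sigma>}. \<bar>fst (ds ! i)\<bar>)"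
    unfolding p_def by (intro sum_mono sum_abs)
  also have "\<dots> = (\<Sum>i\<in>I. \<bar>fst (ds ! i)\<bar>)"
    by (rule sum.image_gen[symmetric]) (simp add: I_def)
  also have "\<dots> = (\<Sum>(q, \<sigma>)\<leftarrow>ds. \<bar>q\<bar>)"
    by (simp add: sum_list_sum_nth atLeast0LessThan I_def case_prod_beta)
  finally show "(\<Sum>\<sigma>\<in>s ` I. \<bar>p \<sigma>\<bar>) \<le> (\<Sum>(q, \<sigma>)\<leftarrow>ds. \<bar>q\<bar>)" .
qed

lemma expval_le_robustness:
  assumes "\<And>\<sigma>. \<sigma> \<in> stab_polytope \<Longrightarrow> \<bar>expval W \<sigma>\<bar> \<le> 1"
    and "finite F" "F \<subseteq> stab_polytope" "\<rho> = (\<Sum>\<sigma>\<in>F. q \<sigma> *\<^sub>R \<sigma>)"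
  shows "expval W \<rho> \<le> robustness \<rho>"
  unfolding robustness_eq_Inf_stab_costs
proof (rule cInf_greatest)
  show "stab_costs \<rho> \<noteq> {}"
    using assms(2-4) unfolding stab_costs_def by auto
next
  fix r assume "r \<in> stab_costs \<rho>"
  then obtain F q where F: "F \<subseteq> stab_polytope" "\<rho> = (\<Sum>\<sigma>\<in>F. q \<sigma> *\<^sub>R \<sigma>)"
    and r: "r = (\<Sum>\<sigma>\<in>F. \<bar>q \<sigma>\<bar>)"
    unfolding stab_costs_def by blast
  have "q \<sigma> * expval W \<sigma> \<le> \<bar>q \<sigma>\<bar>" if "\<sigma> \<in> F" for \<sigma>
  proof -
    have "\<bar>expval W \<sigma>\<bar> \<le> 1"
      using assms(1) F(1) that by blast
    then have "\<bar>q \<sigma> * expval W \<sigma>\<bar> \<le> \<bar>q \<sigma>\<bar>"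
      by (simp add: abs_mult mult_left_le)
    then show ?thesis
      by linarith
  qed
  then show "expval W \<rho> \<le> r"
    unfolding F(2) r expval_sum by (rule sum_mono)
qed

lemma robustness_eqI:
  assumes "\<forall>(q, \<sigma>)\<in>set ds. \<sigma> \<in> stab_polytope" and "\<rho> = (\<Sum>(q, \<sigma>)\<leftarrow>ds. q *\<^sub>R \<sigma>)"
    and "\<And>U. clifford2 U \<Longrightarrow> \<bar>expval W (outer (U *v ket00))\<bar> \<le> 1"
    and "(\<Sum>(q, \<sigma>)\<leftarrow>ds. \<bar>q\<bar>) = r" and "expval W \<rho> = r"
  shows "robustness \<rho> = r"
proof -
  obtain F p where F: "finite F" "F \<subseteq> stab_polytope" "\<rho> = (\<Sum>\<sigma>\<in>F. p \<sigma> *\<^sub>R \<sigma>)"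
    and cost: "(\<Sum>\<sigma>\<in>F. \<bar>p \<sigma>\<bar>) \<le> r"
    using stab_decomposition_of_list[OF assms(1,2)] unfolding assms(4) .
  have "robustness \<rho> \<le> r"
    using robustness_le_finite[OF F] cost by linarith
  moreover have "r \<le> robustness \<rho>"
    using expval_le_robustness[OF expval_bounded_on_stab_polytope[OF assms(3)] F] assms(5) by simp
  ultimately show ?thesis
    by linarith
qed

lemma expval_id_stabilizer_state:
  assumes "clifford2 U"
  shows "expval (mat 1) (outer (U *v ket00)) = 1"
proof -
  have "trace (outer (U *v ket00)) = trace ((U ** outer ket00) ** adj U)"
    by (simp add: outer_mult)
  also have "\<dots> = trace (adj U ** (U ** outer ket00))"
    by (rule trace_mul_sym)
  also have "\<dots> = trace (outer ket00)"
    using assms by (simp add: matrix_mul_assoc unitary_def clifford2_def)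
  also have "\<dots> = 1"
    by (simp add: trace_def sum_UNIV_2x2 ket00_def outer_def)
  finally show ?thesis
    by (simp add: expval_def)
qed

definition bell_witness :: qqmat where
  "bell_witness = smat (1/2) (kron pI pI + kron pZ pI + kron pI pZ + kron pX pX - kron pY pY - kron pZ pZ)"

definition bell_witness_support :: "qqmat set" where
  "bell_witness_support = {kron pI pI, kron pZ pI, kron pI pZ, kron pX pX,
     smat (-1) (kron pY pY), smat (-1) (kron pZ pZ)}"

lemma trace_smat: "trace (W ** smat c M) = c * trace (W ** M)"
  unfolding smat_mult_right by (simp add: trace_def smat_def sum_distrib_left)

lemma trace_bell_witness_pauli:
  "trace (bell_witness ** kron pI pI) = 2" "trace (bell_witness ** kron pI pX) = 0"
  "trace (bell_witness ** kron pI pY) = 0" "trace (bell_witness ** kron pI pZ) = 2"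
  "trace (bell_witness ** kron pX pI) = 0" "trace (bell_witness ** kron pX pX) = 2"
  "trace (bell_witness ** kron pX pY) = 0" "trace (bell_witness ** kron pX pZ) = 0"
  "trace (bell_witness ** kron pY pI) = 0" "trace (bell_witness ** kron pY pX) = 0"
  "trace (bell_witness ** kron pY pY) = -2" "trace (bell_witness ** kron pY pZ) = 0"
  "trace (bell_witness ** kron pZ pI) = 2" "trace (bell_witness ** kron pZ pX) = 0"
  "trace (bell_witness ** kron pZ pY) = 0" "trace (bell_witness ** kron pZ pZ) = -2"
  by (simp_all add: bell_witness_def trace_def mat_simps)

lemma expval_bell_witness_pauli:
  assumes "M \<in> pauli_group2"
  shows "expval bell_witness M \<in> {-2, 0, 2}"
    and "expval bell_witness M = 2 \<Longrightarrow> M \<in> bell_witness_support"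
proof -
  obtain c P Q where M: "M = smat c (kron P Q)" and "c \<in> phases" "P \<in> paulis" "Q \<in> paulis"
    using assms unfolding pauli_group2_def by blast
  then show "expval bell_witness M \<in> {-2, 0, 2}"
    and "expval bell_witness M = 2 \<Longrightarrow> M \<in> bell_witness_support"
    by (auto simp: expval_def trace_smat trace_bell_witness_pauli bell_witness_support_def smat_1)
qed

lemma expval_bell_witness_commuting:
  assumes "P \<in> bell_witness_support" "Q \<in> bell_witness_support" "P \<noteq> Q" "P \<noteq> mat 1" "Q \<noteq> mat 1"
    and "P ** Q = Q ** P"
  shows "expval bell_witness (P ** Q) = -2"
  using assms unfolding bell_witness_support_def insert_iff empty_iff
  by (elim disjE) (simp_all only: pauli_algebra,
    simp_all add: expval_def trace_smat trace_bell_witness_pauli, simp_all add: mat_simps)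

lemma expval_bell_witness_stabilizer_state:
  assumes "clifford2 U"
  shows "\<bar>expval bell_witness (outer (U *v ket00))\<bar> \<le> 1"
proof -
  obtain P Q R where group: "P \<in> pauli_group2" "Q \<in> pauli_group2" "R \<in> pauli_group2"
    and mult: "P ** Q = R" "Q ** P = R" "P ** R = Q" "R ** P = Q" "Q ** R = P" "R ** Q = P"
    and distinct: "distinct [mat 1, P, Q, R]" and state: "outer (U *v ket00) = (1/4) *\<^sub>R (mat 1 + P + Q + R)"
    using stabilizer_state_pauli_expansion[OF assms] by blast
  interpret linear "expval bell_witness"
    by (rule linear_expval)
  define w where "w M = expval bell_witness M" for M
  have "w (mat 1) = 2"
    by (simp add: w_def expval_def bell_witness_def trace_def mat_simps)
  then have w_sum: "expval bell_witness (outer (U *v ket00)) = (2 + w P + w Q + w R) / 4"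
    by (simp add: state add scale w_def)
  have w_range: "w M \<in> {-2, 0, 2}" if "M \<in> {P, Q, R}" for M
    using that group expval_bell_witness_pauli(1) by (auto simp: w_def)
  have pair: "w (M ** N) = -2" if "M \<in> {P, Q, R}" "N \<in> {P, Q, R}" "M \<noteq> N" "w M = 2" "w N = 2" for M N
  proof (rule expval_bell_witness_commuting[folded w_def])
    show "M \<in> bell_witness_support" "N \<in> bell_witness_support"
      using that group expval_bell_witness_pauli(2) by (auto simp: w_def)
    show "M \<noteq> N" "M \<noteq> mat 1" "N \<noteq> mat 1" "M ** N = N ** M"
      using that distinct mult by auto
  qed
  txt \<open>Any two of P, Q, R commute, and their product is the third.\<close>
  have "w P = 2 \<Longrightarrow> w Q = 2 \<Longrightarrow> w R = -2" "w P = 2 \<Longrightarrow> w R = 2 \<Longrightarrow> w Q = -2"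
    "w Q = 2 \<Longrightarrow> w R = 2 \<Longrightarrow> w P = -2"
    using pair[of P Q] pair[of P R] pair[of Q R] distinct mult(1,3,5) by auto
  moreover have "w P \<in> {-2, 0, 2}" "w Q \<in> {-2, 0, 2}" "w R \<in> {-2, 0, 2}"
    using w_range by auto
  ultimately show ?thesis
    unfolding w_sum by auto
qed

section \<open>Amplitude damping of the Bell states\<close>

lemma AD2_expand: "AD2 \<gamma> \<rho> =
   kron (AD_kraus \<gamma> 0) (AD_kraus \<gamma> 0) ** \<rho> ** adj (kron (AD_kraus \<gamma> 0) (AD_kraus \<gamma> 0)) +
   kron (AD_kraus \<gamma> 0) (AD_kraus \<gamma> 1) ** \<rho> ** adj (kron (AD_kraus \<gamma> 0) (AD_kraus \<gamma> 1)) +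
   kron (AD_kraus \<gamma> 1) (AD_kraus \<gamma> 0) ** \<rho> ** adj (kron (AD_kraus \<gamma> 1) (AD_kraus \<gamma> 0)) +
   kron (AD_kraus \<gamma> 1) (AD_kraus \<gamma> 1) ** \<rho> ** adj (kron (AD_kraus \<gamma> 1) (AD_kraus \<gamma> 1))"
  unfolding AD2_def by (simp add: numeral_2_eq_2 lessThan_Suc add.assoc)

lemma of_real_sqrt_mult_self:
  assumes "0 \<le> x"
  shows "complex_of_real (sqrt x) * complex_of_real (sqrt x) = complex_of_real x"
    "complex_of_real (sqrt x) * (complex_of_real (sqrt x) * y) = complex_of_real x * y"
  using assms by (simp_all flip: of_real_mult mult.assoc)

definition damped_Phi_plus :: "real \<Rightarrow> qqmat" where
  "damped_Phi_plus \<gamma> = mat4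
     [[of_real ((1 + \<gamma>\<^sup>2) / 2), 0, 0, of_real ((1 - \<gamma>) / 2)],
      [0, of_real (\<gamma> * (1 - \<gamma>) / 2), 0, 0],
      [0, 0, of_real (\<gamma> * (1 - \<gamma>) / 2), 0],
      [of_real ((1 - \<gamma>) / 2), 0, 0, of_real ((1 - \<gamma>)\<^sup>2 / 2)]]"

definition damped_Psi_plus :: "real \<Rightarrow> qqmat" where
  "damped_Psi_plus \<gamma> = mat4
     [[of_real \<gamma>, 0, 0, 0],
      [0, of_real ((1 - \<gamma>) / 2), of_real ((1 - \<gamma>) / 2), 0],
      [0, of_real ((1 - \<gamma>) / 2), of_real ((1 - \<gamma>) / 2), 0],
      [0, 0, 0, 0]]"

lemma AD2_Phi_plus:
  assumes "0 \<le> \<gamma>" "\<gamma> \<le> 1"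
  shows "AD2 \<gamma> (outer Phi_plus) = damped_Phi_plus \<gamma>"
  unfolding AD2_expand AD_kraus_def Phi_plus_def inv_sqrt2_def[symmetric] damped_Phi_plus_def
  using assms by (simp add: mat_simps of_real_sqrt_mult_self mult_ac power2_eq_square)

lemma AD2_Psi_plus:
  assumes "0 \<le> \<gamma>" "\<gamma> \<le> 1"
  shows "AD2 \<gamma> (outer Psi_plus) = damped_Psi_plus \<gamma>"
  unfolding AD2_expand AD_kraus_def Psi_plus_def inv_sqrt2_def[symmetric] damped_Psi_plus_def
  using assms by (simp add: mat_simps of_real_sqrt_mult_self mult_ac power2_eq_square)

lemma robustness_damped_Phi_plus:
  assumes "0 \<le> \<gamma>" "\<gamma> \<le> 1"
  shows "robustness (damped_Phi_plus \<gamma>) = 1 + \<gamma> * (1 - \<gamma>)"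
proof (rule robustness_eqI)
  let ?p = "\<gamma> * (1 - \<gamma>) / 2"
  let ?ds = "[(\<gamma> - ?p, outer (basis_ket 0 0)), (?p, outer (basis_ket 0 1)), (?p, outer (basis_ket 1 0)),
    (- ?p, outer (basis_ket 1 1)), (1 - \<gamma>, outer Phi_plus)]"
  show "\<forall>(q, \<sigma>)\<in>set ?ds. \<sigma> \<in> stab_polytope"
    by (simp add: basis_state_in_stab_polytope Phi_plus_in_stab_polytope)
  show "damped_Phi_plus \<gamma> = (\<Sum>(q, \<sigma>)\<leftarrow>?ds. q *\<^sub>R \<sigma>)"
    unfolding damped_Phi_plus_def Phi_plus_def inv_sqrt2_def[symmetric]
    by (simp add: basis_ket_def mat_simps) (simp add: scaleR_conv_of_real field_simps power2_eq_square)
  have "0 \<le> ?p" "?p \<le> \<gamma>"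
    using assms by (auto simp: field_simps mult_left_le)
  then show "(\<Sum>(q, \<sigma>)\<leftarrow>?ds. \<bar>q\<bar>) = 1 + \<gamma> * (1 - \<gamma>)"
    using assms by (simp add: algebra_simps)
  show "expval bell_witness (damped_Phi_plus \<gamma>) = 1 + \<gamma> * (1 - \<gamma>)"
    by (simp add: expval_def bell_witness_def damped_Phi_plus_def trace_def mat_simps)
      (simp add: field_simps power2_eq_square)
qed (rule expval_bell_witness_stabilizer_state)

lemma robustness_damped_Psi_plus:
  assumes "0 \<le> \<gamma>" "\<gamma> \<le> 1"
  shows "robustness (damped_Psi_plus \<gamma>) = 1"
proof (rule robustness_eqI)
  let ?ds = "[(\<gamma>, outer (basis_ket 0 0)), (1 - \<gamma>, outer Psi_plus)]"
  show "\<forall>(q, \<sigma>)\<in>set ?ds. \<sigma> \<in> stab_polytope"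
    by (simp add: basis_state_in_stab_polytope Psi_plus_in_stab_polytope)
  show "damped_Psi_plus \<gamma> = (\<Sum>(q, \<sigma>)\<leftarrow>?ds. q *\<^sub>R \<sigma>)"
    unfolding damped_Psi_plus_def Psi_plus_def inv_sqrt2_def[symmetric]
    by (simp add: basis_ket_def mat_simps) (simp add: scaleR_conv_of_real)
  show "(\<Sum>(q, \<sigma>)\<leftarrow>?ds. \<bar>q\<bar>) = 1"
    using assms by simp
  show "expval (mat 1) (damped_Psi_plus \<gamma>) = 1"
    by (simp add: expval_def damped_Psi_plus_def trace_def mat_simps)
qed (simp add: expval_id_stabilizer_state)

section \<open>Concurrence\<close>

lemma det_X_shaped:
  fixes A :: "'a::comm_ring_1 ^ (2 \<times> 2) ^ (2 \<times> 2)"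
  assumes "\<And>i j. (fst i = snd i) \<noteq> (fst j = snd j) \<Longrightarrow> A $ i $ j = 0"
  shows "det A = (A$(0,0)$(0,0) * A$(1,1)$(1,1) - A$(0,0)$(1,1) * A$(1,1)$(0,0)) *
                 (A$(0,1)$(0,1) * A$(1,0)$(1,0) - A$(0,1)$(1,0) * A$(1,0)$(0,1))"
proof -
  have zero: "A$(0,0)$(0,1) = 0" "A$(0,0)$(1,0) = 0" "A$(1,1)$(0,1) = 0" "A$(1,1)$(1,0) = 0"
    "A$(0,1)$(0,0) = 0" "A$(0,1)$(1,1) = 0" "A$(1,0)$(0,0) = 0" "A$(1,0)$(1,1) = 0"
    by (simp_all add: assms)
  have f1: "finite {(0::2,1::2),(1,0),(1,1)}" "(0,0) \<notin> {(0::2,1::2),(1,0),(1,1)}"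
    and f2: "finite {(1::2,0::2),(1,1)}" "(0,1) \<notin> {(1::2,0::2),(1,1)}"
    and f3: "finite {(1::2,1::2)}" "(1,0) \<notin> {(1::2,1::2)}"
    by auto
  show ?thesis
    unfolding det_def UNIV_2x2 sum_over_permutations_insert[OF f1] sum_over_permutations_insert[OF f2]
      sum_over_permutations_insert[OF f3] permutes_sing
    by (simp add: zero sign_swap_id permutation_swap_id permutation_compose sign_compose
        transpose_def algebra_simps)
qed

lemma charpoly_X_shaped:
  "charpoly (mat4 [[a, 0, 0, b], [0, c, d, 0], [0, e, f, 0], [g, 0, 0, h]]) =
     [:a * h - b * g, - (a + h), 1:] * [:c * f - d * e, - (c + f), 1:]"
proof -
  have "(fst i = snd i) \<noteq> (fst j = snd j) \<Longrightarrow>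
      ((\<chi> i j. (if i = j then [:0, 1:] else 0) - [:mat4 [[a, 0, 0, b], [0, c, d, 0], [0, e, f, 0], [g, 0, 0, h]] $ i $ j:])
        :: complex poly ^ (2 \<times> 2) ^ (2 \<times> 2)) $ i $ j = 0" for i j
    using exhaust_2[of "fst i"] exhaust_2[of "snd i"] exhaust_2[of "fst j"] exhaust_2[of "snd j"]
    by (cases i; cases j) auto
  then show ?thesis
    unfolding charpoly_def by (subst det_X_shaped) (auto simp: algebra_simps)
qed

lemma quadratic_factor: "[:a * b, - (a + b), 1:] = [:- a, 1:] * [:- b, 1::'a::comm_ring_1:]"
  by (simp add: algebra_simps)

lemma proots_four_linear_factors:
  "proots ([:- a, 1:] * [:- b, 1:] * [:- c, 1:] * [:- d, 1::complex:]) = {#a, b, c, d#}"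
proof -
  have nonzero: "[:- a, 1:] * [:- b, 1:] * [:- c, 1:] \<noteq> 0" "[:- a, 1:] * [:- b, 1:] \<noteq> 0"
    "[:- a, 1::complex:] \<noteq> 0" "[:- b, 1::complex:] \<noteq> 0" "[:- c, 1::complex:] \<noteq> 0" "[:- d, 1::complex:] \<noteq> 0"
    by (simp_all add: no_zero_divisors)
  show ?thesis
    by (simp only: proots_mult[OF nonzero(1,6)] proots_mult[OF nonzero(2,5)] proots_mult[OF nonzero(3,4)]
        proots_linear_factor) (simp add: add_mset_commute)
qed

lemma concurrence_eqI:
  assumes "proots (charpoly (\<rho> ** spin_flip \<rho>)) = {#of_real (a\<^sup>2), of_real (b\<^sup>2), of_real (c\<^sup>2), of_real (d\<^sup>2)#}"
    and "0 \<le> b" "0 \<le> c" "0 \<le> d" "b \<le> a" "c \<le> a" "d \<le> a"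
  shows "concurrence \<rho> = max 0 (a - b - c - d)"
proof -
  define L where "L = sorted_list_of_multiset {#a, b, c, d#}"
  have "image_mset (\<lambda>z. sqrt (Re z)) (proots (charpoly (\<rho> ** spin_flip \<rho>))) = {#a, b, c, d#}"
    using assms by simp
  then have conc: "concurrence \<rho> = max 0 (rev L ! 0 - rev L ! 1 - rev L ! 2 - rev L ! 3)"
    by (simp add: concurrence_def L_def)
  have mL: "mset L = {#a, b, c, d#}" and "sorted L"
    by (simp_all add: L_def)
  moreover have "length L = 4"
    using arg_cong[OF mL, of size] by simp
  ultimately obtain x0 x1 x2 x3 where L: "L = [x0, x1, x2, x3]" and "x2 \<le> x3"
    by (auto simp: length_Suc_conv numeral_eq_Suc)
  have "set L = {a, b, c, d}"
    using arg_cong[OF mL, of set_mset] by simp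
  then have "x3 = a"
    using assms(5-7) \<open>sorted L\<close> unfolding L by (auto intro: antisym)
  moreover have "x0 + x1 + x2 + x3 = a + b + c + d"
    using arg_cong[OF mL, of sum_mset] unfolding L by (simp add: algebra_simps)
  ultimately show ?thesis
    unfolding conc L by simp
qed

lemma concurrence_damped_Phi_plus:
  assumes "0 \<le> \<gamma>" "\<gamma> \<le> 1"
  shows "concurrence (damped_Phi_plus \<gamma>) = (1 - \<gamma>)\<^sup>2"
proof -
  define p where "p = (1 + \<gamma>\<^sup>2) / 2 * ((1 - \<gamma>)\<^sup>2 / 2) + ((1 - \<gamma>) / 2)\<^sup>2"
  define q where "q = (1 + \<gamma>\<^sup>2) * (1 - \<gamma>) / 2"
  define r where "r = (1 - \<gamma>) ^ 3 / 2"
  define k where "k = (1 - \<gamma>) * sqrt (1 + \<gamma>\<^sup>2) / 2"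
  define z where "z = (1 - \<gamma>) / 2"
  define m where "m = \<gamma> * (1 - \<gamma>) / 2"
  txt \<open>The square roots of the eigenvalues of \<rho> \<rho>~ are k + z, k - z, m and m.\<close>
  have product: "damped_Phi_plus \<gamma> ** spin_flip (damped_Phi_plus \<gamma>) =
      mat4 [[of_real p, 0, 0, of_real q], [0, of_real (m\<^sup>2), 0, 0], [0, 0, of_real (m\<^sup>2), 0], [of_real r, 0, 0, of_real p]]"
    unfolding damped_Phi_plus_def spin_flip_def p_def q_def r_def m_def
    by (simp add: mat_simps) (simp add: algebra_simps power2_eq_square power3_eq_cube)
  have kk: "k\<^sup>2 = (1 - \<gamma>)\<^sup>2 * (1 + \<gamma>\<^sup>2) / 4"
    by (simp add: k_def power_mult_distrib power_divide)
  have "(k + z)\<^sup>2 * (k - z)\<^sup>2 = (k\<^sup>2 - z\<^sup>2)\<^sup>2" "(k + z)\<^sup>2 + (k - z)\<^sup>2 = 2 * k\<^sup>2 + 2 * z\<^sup>2"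
    by (simp_all add: power2_eq_square algebra_simps)
  then have "p * p - q * r = (k + z)\<^sup>2 * (k - z)\<^sup>2" "p + p = (k + z)\<^sup>2 + (k - z)\<^sup>2"
    unfolding kk p_def q_def r_def z_def by (simp_all add: field_simps power2_eq_square power3_eq_cube)
  then have coeffs: "of_real p * of_real p - of_real q * of_real r = (of_real ((k + z)\<^sup>2) * of_real ((k - z)\<^sup>2) :: complex)"
    "of_real p + of_real p = (of_real ((k + z)\<^sup>2) + of_real ((k - z)\<^sup>2) :: complex)"
    by (metis of_real_mult of_real_diff, metis of_real_add)
  have "charpoly (damped_Phi_plus \<gamma> ** spin_flip (damped_Phi_plus \<gamma>)) =
      [:of_real p * of_real p - of_real q * of_real r, - (of_real p + of_real p), 1:] *
      [:of_real (m\<^sup>2) * of_real (m\<^sup>2) - 0 * 0, - (of_real (m\<^sup>2) + of_real (m\<^sup>2)), 1:]"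
    unfolding product by (rule charpoly_X_shaped)
  also have "\<dots> = [:- of_real ((k + z)\<^sup>2), 1:] * [:- of_real ((k - z)\<^sup>2), 1:] * ([:- of_real (m\<^sup>2), 1:] * [:- of_real (m\<^sup>2), 1:])"
    unfolding coeffs mult_zero_left diff_zero quadratic_factor ..
  finally have "proots (charpoly (damped_Phi_plus \<gamma> ** spin_flip (damped_Phi_plus \<gamma>))) =
      {#of_real ((k + z)\<^sup>2), of_real ((k - z)\<^sup>2), of_real (m\<^sup>2), of_real (m\<^sup>2)#}"
    by (simp only: mult.assoc [symmetric] proots_four_linear_factors)
  moreover have "(1 - \<gamma>) * 1 \<le> (1 - \<gamma>) * sqrt (1 + \<gamma>\<^sup>2)"
    using assms by (intro mult_left_mono) auto
  then have "z \<le> k"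
    by (simp add: k_def z_def)
  moreover have "m \<le> z" "0 \<le> m"
    using assms by (simp_all add: m_def z_def mult_left_le_one_le divide_right_mono)
  ultimately have "concurrence (damped_Phi_plus \<gamma>) = max 0 ((k + z) - (k - z) - m - m)"
    by (intro concurrence_eqI) simp_all
  also have "(k + z) - (k - z) - m - m = (1 - \<gamma>)\<^sup>2"
    by (simp add: m_def z_def power2_eq_square algebra_simps)
  finally show ?thesis
    by simp
qed

lemma concurrence_damped_Psi_plus:
  assumes "0 \<le> \<gamma>" "\<gamma> \<le> 1"
  shows "concurrence (damped_Psi_plus \<gamma>) = 1 - \<gamma>"
proof -
  define s where "s = (1 - \<gamma>)\<^sup>2 / 2"
  have "damped_Psi_plus \<gamma> ** spin_flip (damped_Psi_plus \<gamma>) =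
      mat4 [[0, 0, 0, 0], [0, of_real s, of_real s, 0], [0, of_real s, of_real s, 0], [0, 0, 0, 0]]"
    unfolding damped_Psi_plus_def spin_flip_def s_def
    by (simp add: mat_simps) (simp add: algebra_simps power2_eq_square)
  then have "charpoly (damped_Psi_plus \<gamma> ** spin_flip (damped_Psi_plus \<gamma>)) =
      [:- of_real ((1 - \<gamma>)\<^sup>2), 1:] * [:- of_real (0\<^sup>2), 1:] * [:- of_real (0\<^sup>2), 1:] * [:- of_real (0\<^sup>2), 1:]"
    by (simp add: charpoly_X_shaped s_def algebra_simps)
  then have "proots (charpoly (damped_Psi_plus \<gamma> ** spin_flip (damped_Psi_plus \<gamma>))) =
      {#of_real ((1 - \<gamma>)\<^sup>2), of_real (0\<^sup>2), of_real (0\<^sup>2), of_real (0\<^sup>2)#}"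
    by (simp only: proots_four_linear_factors)
  then have "concurrence (damped_Psi_plus \<gamma>) = max 0 ((1 - \<gamma>) - 0 - 0 - 0)"
    using assms by (intro concurrence_eqI) simp_all
  then show ?thesis
    using assms by simp
qed

theorem corollary2:
  fixes \<gamma> :: real
  assumes "0 \<le> \<gamma>" and "\<gamma> \<le> 1"
  shows "robustness (AD2 \<gamma> (outer Phi_plus)) = 1 + \<gamma> * (1 - \<gamma>) \<and>
         robustness (AD2 \<gamma> (outer Psi_plus)) = 1 \<and>
         concurrence (AD2 \<gamma> (outer Phi_plus)) = (1 - \<gamma>)\<^sup>2 \<and>
         concurrence (AD2 \<gamma> (outer Psi_plus)) = 1 - \<gamma>"
  unfolding AD2_Phi_plus[OF assms] AD2_Psi_plus[OF assms]
  using robustness_damped_Phi_plus[OF assms] robustness_damped_Psi_plus[OF assms]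
    concurrence_damped_Phi_plus[OF assms] concurrence_damped_Psi_plus[OF assms]
  by simp

end
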